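(* Let $m\ge1$ be an integer, $h\in\mathbb{R}$, and let $y_1,y_2,\dots$ be i.i.d. real random variables under a probability measure $\mathbb{P}_\infty$, where $y_i=\mathrm{LLR}(i)=\ln\big(f_1(x_i)/f_0(x_i)\big)$ with $x_1,x_2,\dots$ i.i.d. with density $f_0$ under $\mathbb{P}_\infty$. For $n\ge m$ let $S_n=\sum_{i=n-m+1}^{n}y_i$. Let $k\ge m$ and $N>k$ be integers. Then $$\mathbb{P}_\infty\Big(\bigcap_{i=k}^{k+N-1}\{S_i<h\}\Big)\ \ge\ \big[\mathbb{P}_\infty(S_m<h)\big]^N.$$
   Context: $f_0, f_1$ are probability density functions on $\mathbb{R}$ such that the log-likelihood ratios are well-defined real random variables. *)

theory Defs
  imports "HOL-Probability.Probability"
begin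

definition LLR :: "(real \<Rightarrow> real) \<Rightarrow> (real \<Rightarrow> real) \<Rightarrow> (nat \<Rightarrow> 'a \<Rightarrow> real) \<Rightarrow> nat \<Rightarrow> 'a \<Rightarrow> real" where
  "LLR f0 f1 X i \<omega> = ln (f1 (X i \<omega>) / f0 (X i \<omega>))"

definition window_sum :: "nat \<Rightarrow> (nat \<Rightarrow> 'a \<Rightarrow> real) \<Rightarrow> nat \<Rightarrow> 'a \<Rightarrow> real" where
  "window_sum m y n \<omega> = (\<Sum>i\<in>{n - m + 1..n}. y i \<omega>)"

end

theory Submission
  imports Defs
begin

text \<open>The sliding sums \<open>S\<^sub>i\<close> are nondecreasing functions of the i.i.d. observations
  \<open>y\<^sub>1, y\<^sub>2, \<dots>\<close>, so each event \<open>{S\<^sub>i < h}\<close> is a decreasing event of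
  finitely many of them. By Harris' inequality (the FKG inequality for product measures on a
  linear order) decreasing events are positively correlated, so the probability of their
  intersection is at least the product of their probabilities; by stationarity each factor
  equals \<open>P(S\<^sub>m < h)\<close>.\<close>

lemma (in prob_space) integrable_unit_interval:
  fixes f :: "'a \<Rightarrow> real"
  assumes "f \<in> borel_measurable M" "\<And>x. x \<in> space M \<Longrightarrow> f x \<in> {0..1}"
  shows "integrable M f"
  using assms by (intro integrable_const_bound[where B=1]) auto

lemma (in prob_space) expectation_unit_interval:
  fixes f :: "'a \<Rightarrow> real"
  assumes "f \<in> borel_measurable M" "\<And>x. x \<in> space M \<Longrightarrow> f x \<in> {0..1}"
  shows "expectation f \<in> {0..1}"
  using assms integrable_unit_interval[OF assms]
  by (auto intro!: integral_ge_const integral_le_const)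

text \<open>With \<open>c = E f\<close> and \<open>d\<close> a value of \<open>g\<close> separating
  \<open>{f > c}\<close> from \<open>{f < c}\<close>, the product \<open>(f - c) * (g - d)\<close> is pointwise nonnegative.\<close>
lemma (in prob_space) expectation_mult_ge_similarly_ordered:
  fixes f g :: "'a \<Rightarrow> real"
  assumes fm: "f \<in> borel_measurable M" and gm: "g \<in> borel_measurable M"
    and f01: "\<And>s. s \<in> space M \<Longrightarrow> f s \<in> {0..1}"
    and g01: "\<And>s. s \<in> space M \<Longrightarrow> g s \<in> {0..1}"
    and ordered: "\<And>s t. s \<in> space M \<Longrightarrow> t \<in> space M \<Longrightarrow> f t < f s \<Longrightarrow> g t \<le> g s"
  shows "expectation f * expectation g \<le> expectation (\<lambda>s. f s * g s)"
proof -
  define c where "c = expectation f"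
  define A where "A = {g s | s. s \<in> space M \<and> f s > c}"
  define d where "d = (if A = {} then 1 else Inf A)"
  have bdd: "bdd_below A" unfolding A_def using g01 by (auto intro!: bdd_belowI[of _ 0])
  have above: "d \<le> g s" if "s \<in> space M" "f s > c" for s
  proof -
    have "g s \<in> A" using that unfolding A_def by auto
    then show ?thesis unfolding d_def using bdd by (auto intro: cInf_lower)
  qed
  have below: "g s \<le> d" if s: "s \<in> space M" "f s < c" for s
  proof (cases "A = {}")
    case True
    then show ?thesis using g01[OF s(1)] unfolding d_def by simp
  next
    case False
    have "g s \<le> Inf A"
    proof (rule cInf_greatest[OF False])
      fix a assume "a \<in> A"
      then obtain t where "t \<in> space M" "f t > c" "a = g t" unfolding A_def by auto
      then show "g s \<le> a" using ordered[of t s] s by simp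
    qed
    then show ?thesis using False unfolding d_def by simp
  qed
  have nonneg: "0 \<le> (f s - c) * (g s - d)" if "s \<in> space M" for s
    using above[OF that] below[OF that] by (cases "f s" c rule: linorder_cases) (auto intro: mult_nonpos_nonpos)
  have intf: "integrable M f" and intg: "integrable M g" and intfg: "integrable M (\<lambda>s. f s * g s)"
    using fm gm f01 g01 by (auto intro!: integrable_unit_interval mult_le_one)
  have "0 \<le> expectation (\<lambda>s. (f s - c) * (g s - d))"
    using nonneg by (intro integral_nonneg_AE) auto
  also have "expectation (\<lambda>s. (f s - c) * (g s - d)) = expectation (\<lambda>s. f s * g s - d * f s - c * g s + c * d)"
    by (rule Bochner_Integration.integral_cong) (auto simp: algebra_simps)
  also have "\<dots> = expectation (\<lambda>s. f s * g s) - d * c - c * expectation g + c * d"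
    using intf intg intfg unfolding c_def by (simp add: prob_space)
  finally show ?thesis unfolding c_def by (simp add: algebra_simps)
qed

lemma update_in_space_PiM:
  assumes "y \<in> space (PiM I (\<lambda>_. Q))" "i \<notin> I" "space Q = UNIV"
  shows "y(i := t) \<in> space (PiM (insert i I) (\<lambda>_. Q))"
  using measurable_space[OF measurable_component_update[OF assms(1,2)], of t] assms(3) by simp

lemma antimono_section:
  fixes f :: "('i \<Rightarrow> 'b::order) \<Rightarrow> real"
  assumes "antimono_on (space (PiM (insert i I) (\<lambda>_. Q))) f"
    and "y \<in> space (PiM I (\<lambda>_. Q))" "i \<notin> I" "space Q = UNIV" and "s \<le> t"
  shows "f (y(i := t)) \<le> f (y(i := s))"
proof (rule monotone_onD[OF assms(1)])
  show "y(i := s) \<le> y(i := t)" using assms(5) by (simp add: le_fun_def)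
qed (use update_in_space_PiM[OF assms(2-4)] in auto)

lemma borel_measurable_integral_section:
  fixes f :: "('i \<Rightarrow> 'b) \<Rightarrow> real"
  assumes "prob_space Q" and [measurable]: "f \<in> borel_measurable (PiM (insert i I) (\<lambda>_. Q))"
  shows "(\<lambda>y. \<integral>t. f (y(i := t)) \<partial>Q) \<in> borel_measurable (PiM I (\<lambda>_. Q))"
  using prob_space_imp_sigma_finite[OF assms(1)]
  by (rule sigma_finite_measure.borel_measurable_lebesgue_integral[where f="\<lambda>y t. f (y(i := t))"])
    simp

lemma
  fixes f :: "('i \<Rightarrow> 'b) \<Rightarrow> real"
  assumes Q: "prob_space Q" "space Q = UNIV" and i: "i \<notin> I"
    and fm: "f \<in> borel_measurable (PiM (insert i I) (\<lambda>_. Q))"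
    and f01: "\<And>x. x \<in> space (PiM (insert i I) (\<lambda>_. Q)) \<Longrightarrow> f x \<in> {0..1}"
    and y: "y \<in> space (PiM I (\<lambda>_. Q))"
  shows integrable_section: "integrable Q (\<lambda>t. f (y(i := t)))"
    and integral_section_unit_interval: "(\<integral>t. f (y(i := t)) \<partial>Q) \<in> {0..1}"
proof -
  have m: "(\<lambda>t. f (y(i := t))) \<in> borel_measurable Q"
    using measurable_compose[OF measurable_component_update[OF y i] fm] by (simp add: comp_def)
  have b: "f (y(i := t)) \<in> {0..1}" for t
    using f01 update_in_space_PiM[OF y i Q(2)] by blast
  show "integrable Q (\<lambda>t. f (y(i := t)))"
    using m b by (rule prob_space.integrable_unit_interval[OF Q(1)])
  show "(\<integral>t. f (y(i := t)) \<partial>Q) \<in> {0..1}"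
    using m b by (rule prob_space.expectation_unit_interval[OF Q(1)])
qed

lemma antimono_integral_section:
  fixes f :: "('i \<Rightarrow> 'b::order) \<Rightarrow> real"
  assumes Q: "prob_space Q" "space Q = UNIV" and i: "i \<notin> I"
    and fm: "f \<in> borel_measurable (PiM (insert i I) (\<lambda>_. Q))"
    and f01: "\<And>x. x \<in> space (PiM (insert i I) (\<lambda>_. Q)) \<Longrightarrow> f x \<in> {0..1}"
    and anti: "antimono_on (space (PiM (insert i I) (\<lambda>_. Q))) f"
  shows "antimono_on (space (PiM I (\<lambda>_. Q))) (\<lambda>y. \<integral>t. f (y(i := t)) \<partial>Q)"
proof (intro monotone_onI)
  fix x y assume xy: "x \<in> space (PiM I (\<lambda>_. Q))" "y \<in> space (PiM I (\<lambda>_. Q))" "x \<le> y"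
  show "(\<integral>t. f (y(i := t)) \<partial>Q) \<le> (\<integral>t. f (x(i := t)) \<partial>Q)"
  proof (rule integral_mono)
    show "integrable Q (\<lambda>t. f (y(i := t)))" "integrable Q (\<lambda>t. f (x(i := t)))"
      using integrable_section[OF Q i fm f01] xy by auto
    show "f (y(i := t)) \<le> f (x(i := t))" for t
    proof (rule monotone_onD[OF anti])
      show "x(i := t) \<le> y(i := t)" using xy(3) by (simp add: le_fun_def)
    qed (use xy update_in_space_PiM[OF _ i Q(2)] in auto)
  qed
qed

text \<open>Points of \<open>PiM J\<close> are \<open>undefined\<close> outside \<open>J\<close>, so on its
  space the pointwise order of functions is the coordinatewise order on \<open>J\<close>. The induction
  step integrates out one coordinate, which preserves antitonicity, and applies Chebyshev's
  inequality to the sections.\<close>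
theorem harris_inequality:
  fixes Q :: "'b::linorder measure" and J :: "'i set" and f g :: "('i \<Rightarrow> 'b) \<Rightarrow> real"
  assumes Q: "prob_space Q" "space Q = UNIV" and "finite J"
    and "f \<in> borel_measurable (PiM J (\<lambda>_. Q))" "g \<in> borel_measurable (PiM J (\<lambda>_. Q))"
    and "\<And>x. x \<in> space (PiM J (\<lambda>_. Q)) \<Longrightarrow> f x \<in> {0..1}"
    and "\<And>x. x \<in> space (PiM J (\<lambda>_. Q)) \<Longrightarrow> g x \<in> {0..1}"
    and "antimono_on (space (PiM J (\<lambda>_. Q))) f" "antimono_on (space (PiM J (\<lambda>_. Q))) g"
  shows "(\<integral>x. f x \<partial>PiM J (\<lambda>_. Q)) * (\<integral>x. g x \<partial>PiM J (\<lambda>_. Q))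
           \<le> (\<integral>x. f x * g x \<partial>PiM J (\<lambda>_. Q))"
  using \<open>finite J\<close> assms(4-)
proof (induction J arbitrary: f g rule: finite_induct)
  case empty
  have "(\<integral>x. u x \<partial>PiM {} (\<lambda>_. Q)) = u (\<lambda>_. undefined)" for u :: "('i \<Rightarrow> 'b) \<Rightarrow> real"
    by (simp add: PiM_empty lebesgue_integral_count_space_finite)
  then show ?case by simp
next
  case (insert i I f g)
  interpret Q: prob_space Q by fact
  interpret product_sigma_finite "\<lambda>_. Q" by unfold_locales
  let ?P = "PiM (insert i I) (\<lambda>_. Q)" and ?PI = "PiM I (\<lambda>_. Q)"
  interpret P: prob_space ?P using Q by (intro prob_space_PiM) auto
  interpret PI: prob_space ?PI using Q by (intro prob_space_PiM) auto
  note [measurable] = insert.prems(1,2)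
  define F where "F y = (\<integral>t. f (y(i := t)) \<partial>Q)" for y
  define G where "G y = (\<integral>t. g (y(i := t)) \<partial>Q)" for y
  define FG where "FG y = (\<integral>t. f (y(i := t)) * g (y(i := t)) \<partial>Q)" for y
  have fg01: "f x * g x \<in> {0..1}" if "x \<in> space ?P" for x
    using insert.prems(3,4)[OF that] by (auto intro: mult_le_one)
  have Fm: "F \<in> borel_measurable ?PI" and Gm: "G \<in> borel_measurable ?PI"
    and FGm: "FG \<in> borel_measurable ?PI"
    unfolding F_def G_def FG_def using Q(1) by (simp_all add: borel_measurable_integral_section)
  have F01: "F y \<in> {0..1}" and G01: "G y \<in> {0..1}" and FG01: "FG y \<in> {0..1}"
    if "y \<in> space ?PI" for y
  proof -
    note section_unit_interval = integral_section_unit_interval[OF Q insert.hyps(2) _ _ that]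
    show "F y \<in> {0..1}" unfolding F_def using insert.prems(1,3) by (rule section_unit_interval)
    show "G y \<in> {0..1}" unfolding G_def using insert.prems(2,4) by (rule section_unit_interval)
    show "FG y \<in> {0..1}" unfolding FG_def using fg01 by (intro section_unit_interval) auto
  qed
  have F_anti: "antimono_on (space ?PI) F"
    unfolding F_def by (rule antimono_integral_section[OF Q insert.hyps(2) insert.prems(1,3,5)])
  have G_anti: "antimono_on (space ?PI) G"
    unfolding G_def by (rule antimono_integral_section[OF Q insert.hyps(2) insert.prems(2,4,6)])
  have sections_correlated: "F y * G y \<le> FG y" if y: "y \<in> space ?PI" for y
    unfolding F_def G_def FG_def
  proof (rule Q.expectation_mult_ge_similarly_ordered)
    note upd = update_in_space_PiM[OF y insert.hyps(2) Q(2)]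
    show "(\<lambda>t. f (y(i := t))) \<in> borel_measurable Q" "(\<lambda>t. g (y(i := t))) \<in> borel_measurable Q"
      using measurable_component_update[OF y insert.hyps(2)] by simp_all
    show "f (y(i := t)) \<in> {0..1}" "g (y(i := t)) \<in> {0..1}" for t
      using insert.prems(3,4) upd by auto
    fix s t assume less: "f (y(i := t)) < f (y(i := s))"
    have "s \<le> t"
    proof (rule ccontr)
      assume "\<not> s \<le> t"
      then have "f (y(i := s)) \<le> f (y(i := t))"
        by (intro antimono_section[OF insert.prems(5) y insert.hyps(2) Q(2)]) simp
      with less show False by simp
    qed
    then show "g (y(i := t)) \<le> g (y(i := s))"
      by (rule antimono_section[OF insert.prems(6) y insert.hyps(2) Q(2)])
  qed
  have "integrable ?P f" "integrable ?P g" "integrable ?P (\<lambda>x. f x * g x)"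
    using insert.prems(1-4) fg01 by (auto intro!: P.integrable_unit_interval)
  note integral_insert = this[THEN product_integral_insert[OF insert.hyps]]
  have "(\<integral>x. f x \<partial>?P) * (\<integral>x. g x \<partial>?P) = (\<integral>y. F y \<partial>?PI) * (\<integral>y. G y \<partial>?PI)"
    unfolding F_def G_def integral_insert ..
  also have "\<dots> \<le> (\<integral>y. F y * G y \<partial>?PI)"
    by (rule insert.IH[OF Fm Gm F01 G01 F_anti G_anti])
  also have "\<dots> \<le> (\<integral>y. FG y \<partial>?PI)"
  proof (rule integral_mono)
    show "integrable ?PI (\<lambda>y. F y * G y)"
      using Fm Gm F01 G01 by (intro PI.integrable_unit_interval) (auto intro: mult_le_one)
    show "integrable ?PI FG" using FGm FG01 by (rule PI.integrable_unit_interval)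
  qed (rule sections_correlated)
  also have "\<dots> = (\<integral>x. f x * g x \<partial>?P)"
    unfolding FG_def integral_insert ..
  finally show ?case .
qed

corollary harris_inequality_events:
  fixes Q :: "'b::linorder measure" and J :: "'i set" and E :: "'w \<Rightarrow> ('i \<Rightarrow> 'b) set"
  assumes Q: "prob_space Q" "space Q = UNIV" and J: "finite J" and "finite W"
    and "\<And>w. w \<in> W \<Longrightarrow> E w \<in> sets (PiM J (\<lambda>_. Q))"
    and "\<And>w x y. w \<in> W \<Longrightarrow> x \<in> space (PiM J (\<lambda>_. Q)) \<Longrightarrow> y \<in> E w \<Longrightarrow> x \<le> y
           \<Longrightarrow> x \<in> E w"
  shows "(\<Prod>w\<in>W. measure (PiM J (\<lambda>_. Q)) (E w))
           \<le> measure (PiM J (\<lambda>_. Q)) {z \<in> space (PiM J (\<lambda>_. Q)). \<forall>w\<in>W. z \<in> E w}"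
  using \<open>finite W\<close> assms(5,6)
proof (induction W rule: finite_induct)
  case empty
  interpret prob_space "PiM J (\<lambda>_. Q)" using Q by (intro prob_space_PiM) auto
  show ?case by (simp add: prob_space)
next
  case (insert w W)
  let ?P = "PiM J (\<lambda>_. Q)"
  define A where "A = E w"
  define B where "B = {z \<in> space ?P. \<forall>v\<in>W. z \<in> E v}"
  have A: "A \<in> sets ?P" unfolding A_def using insert.prems(1) by simp
  have B: "B \<in> sets ?P" unfolding B_def using insert.prems(1) insert.hyps(1)
    by (intro sets.sets_Collect_finite_All) (auto intro: sets.sets_Collect_const)
  have antimono_indicator: "antimono_on (space ?P) (indicator C :: _ \<Rightarrow> real)"
    if "\<And>x y. x \<in> space ?P \<Longrightarrow> y \<in> C \<Longrightarrow> x \<le> y \<Longrightarrow> x \<in> C" for C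
  proof (rule monotone_onI)
    fix x y assume "x \<in> space ?P" "y \<in> space ?P" "x \<le> y"
    then show "indicator C y \<le> (indicator C x :: real)"
      using that[of x y] by (cases "y \<in> C") auto
  qed
  have "(\<Prod>v\<in>insert w W. measure ?P (E v)) = measure ?P A * (\<Prod>v\<in>W. measure ?P (E v))"
    using insert.hyps unfolding A_def by simp
  also have "\<dots> \<le> measure ?P A * measure ?P B"
    unfolding B_def using insert.prems by (intro mult_left_mono insert.IH) auto
  also have "\<dots> = (\<integral>x. indicator A x \<partial>?P) * (\<integral>x. indicator B x \<partial>?P)"
    using A B by simp
  also have "\<dots> \<le> (\<integral>x. indicator A x * indicator B x \<partial>?P)"
  proof (rule harris_inequality[OF Q J])
    show "antimono_on (space ?P) (indicator A :: _ \<Rightarrow> real)"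
      using insert.prems(2) unfolding A_def by (intro antimono_indicator) blast
    show "antimono_on (space ?P) (indicator B :: _ \<Rightarrow> real)"
      using insert.prems(2) unfolding B_def by (intro antimono_indicator) blast
  qed (use A B in \<open>simp_all add: indicator_def\<close>)
  also have "\<dots> = measure ?P (A \<inter> B)"
    using A B by (simp flip: indicator_inter_arith)
  also have "A \<inter> B = {z \<in> space ?P. \<forall>v\<in>insert w W. z \<in> E v}"
    unfolding A_def B_def using sets.sets_into_space[OF A[unfolded A_def]] by auto
  finally show ?case .
qed

lemma (in prob_space) distr_restrict_indep_identical:
  assumes indep: "indep_vars (\<lambda>_. borel) Y I" and law: "\<And>j. j \<in> I \<Longrightarrow> distr M borel (Y j) = Q"
    and "K \<subseteq> I" "K \<noteq> {}"
  shows "distr M (PiM K (\<lambda>_. borel)) (\<lambda>\<omega>. \<lambda>j\<in>K. Y j \<omega>) = PiM K (\<lambda>_. Q)"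
proof -
  have indep_K: "indep_vars (\<lambda>_. borel) Y K" using indep_vars_subset[OF indep \<open>K \<subseteq> I\<close>] .
  then have "random_variable borel (Y j)" if "j \<in> K" for j
    using that by (simp add: indep_vars_def)
  then have "distr M (PiM K (\<lambda>_. borel)) (\<lambda>\<omega>. \<lambda>j\<in>K. Y j \<omega>) = PiM K (\<lambda>j. distr M borel (Y j))"
    using indep_vars_iff_distr_eq_PiM'[OF \<open>K \<noteq> {}\<close>, where M'="\<lambda>_. borel" and X=Y] indep_K by simp
  also have "\<dots> = PiM K (\<lambda>_. Q)" using law \<open>K \<subseteq> I\<close> by (intro PiM_cong) auto
  finally show ?thesis .
qed

lemma (in prob_space) prob_restrict_indep_identical:
  assumes indep: "indep_vars (\<lambda>_. borel) Y I" and law: "\<And>j. j \<in> I \<Longrightarrow> distr M borel (Y j) = Q"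
    and K: "K \<subseteq> I" "K \<noteq> {}" and S: "S \<in> sets (PiM K (\<lambda>_. borel))"
  shows "prob {\<omega> \<in> space M. (\<lambda>j\<in>K. Y j \<omega>) \<in> S} = measure (PiM K (\<lambda>_. Q)) S"
proof -
  have "(\<lambda>\<omega>. \<lambda>j\<in>K. Y j \<omega>) \<in> measurable M (PiM K (\<lambda>_. borel))"
    using indep K(1) by (intro measurable_restrict) (auto simp: indep_vars_def)
  from measure_distr[OF this S] show ?thesis
    by (simp add: distr_restrict_indep_identical[OF indep law K(1,2)] vimage_def Int_def conj_commute)
qed

lemma (in prob_space) prob_all_ge_prod_indep_identical:
  fixes Y :: "'i \<Rightarrow> 'a \<Rightarrow> real" and E :: "'w \<Rightarrow> ('i \<Rightarrow> real) set"
  assumes indep: "indep_vars (\<lambda>_. borel) Y I" and law: "\<And>j. j \<in> I \<Longrightarrow> distr M borel (Y j) = Q"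
    and J: "finite J" "J \<subseteq> I" "J \<noteq> {}" and "finite W"
    and E: "\<And>w. w \<in> W \<Longrightarrow> E w \<in> sets (PiM J (\<lambda>_. borel))"
    and down_closed: "\<And>w x y. w \<in> W \<Longrightarrow> x \<in> space (PiM J (\<lambda>_. borel)) \<Longrightarrow> y \<in> E w
      \<Longrightarrow> x \<le> y \<Longrightarrow> x \<in> E w"
  shows "(\<Prod>w\<in>W. prob {\<omega> \<in> space M. (\<lambda>j\<in>J. Y j \<omega>) \<in> E w})
       \<le> prob {\<omega> \<in> space M. \<forall>w\<in>W. (\<lambda>j\<in>J. Y j \<omega>) \<in> E w}"
proof -
  obtain j where "j \<in> I" using J by auto
  then have Q_def: "Q = distr M borel (Y j)" using law by simp
  have Q: "prob_space Q" "space Q = UNIV" "sets Q = sets borel"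
    unfolding Q_def using indep \<open>j \<in> I\<close> by (auto simp: indep_vars_def intro!: prob_space_distr)
  let ?P = "PiM J (\<lambda>_. Q)"
  have sets_P: "sets ?P = sets (PiM J (\<lambda>_. borel))"
    using Q(3) by (intro sets_PiM_cong) auto
  note space_P = sets_eq_imp_space_eq[OF sets_P]
  define A where "A = {z \<in> space ?P. \<forall>w\<in>W. z \<in> E w}"
  have A: "A \<in> sets (PiM J (\<lambda>_. borel))"
    using E \<open>finite W\<close> unfolding A_def space_P
    by (intro sets.sets_Collect_finite_All) (auto intro: sets.sets_Collect_const)
  have "(\<Prod>w\<in>W. prob {\<omega> \<in> space M. (\<lambda>j\<in>J. Y j \<omega>) \<in> E w}) = (\<Prod>w\<in>W. measure ?P (E w))"
    by (intro prod.cong refl prob_restrict_indep_identical[OF indep law J(2,3) E])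
  also have "\<dots> \<le> measure ?P A"
    unfolding A_def
  proof (rule harris_inequality_events[OF Q(1,2) J(1) \<open>finite W\<close>])
    show "E w \<in> sets ?P" if "w \<in> W" for w
      using E[OF that] unfolding sets_P .
    show "x \<in> E w" if "w \<in> W" "x \<in> space ?P" "y \<in> E w" "x \<le> y" for w x y
      using down_closed that unfolding space_P by blast
  qed
  also have "\<dots> = prob {\<omega> \<in> space M. (\<lambda>j\<in>J. Y j \<omega>) \<in> A}"
    by (rule prob_restrict_indep_identical[OF indep law J(2,3) A, symmetric])
  also have "{\<omega> \<in> space M. (\<lambda>j\<in>J. Y j \<omega>) \<in> A} = {\<omega> \<in> space M. \<forall>w\<in>W. (\<lambda>j\<in>J. Y j \<omega>) \<in> E w}"
    unfolding A_def space_P by (auto simp: space_PiM)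
  finally show ?thesis .
qed

lemma measure_PiM_sum_shift:
  fixes Q :: "real measure" and a m :: nat
  assumes Q: "prob_space Q" "sets Q = sets borel" and B: "B \<in> sets borel"
  shows "measure (PiM {a..<a + m} (\<lambda>_. Q))
           {z \<in> space (PiM {a..<a + m} (\<lambda>_. Q)). (\<Sum>j\<in>{a..<a + m}. z j) \<in> B}
       = measure (PiM {..<m} (\<lambda>_. Q)) {z \<in> space (PiM {..<m} (\<lambda>_. Q)). (\<Sum>j<m. z j) \<in> B}"
    (is "measure ?PK ?SK = measure ?P0 ?S0")
proof -
  have sets_PiM: "sets (PiM K (\<lambda>_. Q)) = sets (PiM K (\<lambda>_. borel))" for K :: "nat set"
    using Q(2) by (intro sets_PiM_cong) auto
  define shift where "shift = (\<lambda>z::nat \<Rightarrow> real. \<lambda>l\<in>{..<m}. z (a + l))"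
  have shift_m: "shift \<in> measurable ?PK ?P0"
    unfolding shift_def by (intro measurable_restrict measurable_component_singleton) auto
  have shift_distr: "distr ?PK ?P0 shift = ?P0"
    using distr_PiM_reindex[where M="\<lambda>_. Q" and K="{a..<a + m}" and I="{..<m}" and f="\<lambda>l. a + l"] Q(1)
    unfolding shift_def by (auto simp: inj_on_def)
  have S0: "?S0 \<in> sets ?P0"
    using sets_eq_imp_space_eq[OF sets_PiM] B[measurable] unfolding sets_PiM by (simp only:) measurable
  have preimage: "shift -` ?S0 \<inter> space ?PK = ?SK"
  proof -
    have "(\<Sum>l<m. shift z l) = (\<Sum>j\<in>{a..<a + m}. z j)" for z
      unfolding shift_def by (simp add: sum.atLeastLessThan_shift_0[where m=a] add.commute lessThan_atLeast0)
    then show ?thesis using measurable_space[OF shift_m] by auto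
  qed
  have "measure ?P0 ?S0 = measure ?PK (shift -` ?S0 \<inter> space ?PK)"
    using measure_distr[OF shift_m S0] by (simp add: shift_distr)
  then show ?thesis unfolding preimage ..
qed

lemma window_sum_restrict:
  assumes "{i - m + 1..i} \<subseteq> K"
  shows "window_sum m Y i \<omega> = (\<Sum>j\<in>{i - m + 1..i}. (\<lambda>j\<in>K. Y j \<omega>) j)"
  unfolding window_sum_def using assms by (intro sum.cong refl) (simp add: subset_iff)

lemma (in prob_space) prob_window_sum_indep_identical:
  assumes indep: "indep_vars (\<lambda>_. borel) Y {1..}" and law: "\<And>j. 1 \<le> j \<Longrightarrow> distr M borel (Y j) = Q"
    and B: "B \<in> sets borel" and "1 \<le> m" "m \<le> i"
  shows "prob {\<omega> \<in> space M. window_sum m Y i \<omega> \<in> B}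
       = measure (PiM {..<m} (\<lambda>_. Q)) {z \<in> space (PiM {..<m} (\<lambda>_. Q)). (\<Sum>j<m. z j) \<in> B}"
proof -
  have Q_def: "Q = distr M borel (Y 1)" using law[of 1] by simp
  have Q: "prob_space Q" "sets Q = sets borel"
    unfolding Q_def using indep by (auto simp: indep_vars_def intro!: prob_space_distr)
  define K where "K = {i - m + 1..<i - m + 1 + m}"
  have K: "{i - m + 1..i} = K" "K \<subseteq> {1..}" "K \<noteq> {}"
    unfolding K_def using \<open>1 \<le> m\<close> \<open>m \<le> i\<close> by auto
  define S where "S = {z \<in> space (PiM K (\<lambda>_. borel)). (\<Sum>j\<in>K. z j) \<in> B}"
  have S: "S \<in> sets (PiM K (\<lambda>_. borel))"
    unfolding S_def K_def using B[measurable] by measurable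
  have "{\<omega> \<in> space M. window_sum m Y i \<omega> \<in> B} = {\<omega> \<in> space M. (\<lambda>j\<in>K. Y j \<omega>) \<in> S}"
    unfolding S_def using window_sum_restrict[OF equalityD1[OF K(1)], of Y] K(1)
    by (auto simp: space_PiM)
  also have "prob \<dots> = measure (PiM K (\<lambda>_. Q)) S"
    by (rule prob_restrict_indep_identical[OF indep _ K(2,3) S]) (simp add: law)
  also have "\<dots> = measure (PiM K (\<lambda>_. Q)) {z \<in> space (PiM K (\<lambda>_. Q)). (\<Sum>j\<in>K. z j) \<in> B}"
  proof -
    have "space (PiM K (\<lambda>_. Q)) = space (PiM K (\<lambda>_. borel))"
      by (intro sets_eq_imp_space_eq sets_PiM_cong) (simp_all add: Q(2))
    then show ?thesis unfolding S_def by simp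
  qed
  also have "\<dots> = measure (PiM {..<m} (\<lambda>_. Q)) {z \<in> space (PiM {..<m} (\<lambda>_. Q)). (\<Sum>j<m. z j) \<in> B}"
    unfolding K_def using Q B by (rule measure_PiM_sum_shift)
  finally show ?thesis .
qed

lemma (in prob_space) prob_window_sums_less_ge_power:
  assumes indep: "indep_vars (\<lambda>_. borel) Y {1..}"
    and identical: "\<And>j. 1 \<le> j \<Longrightarrow> distr M borel (Y j) = distr M borel (Y 1)"
    and "1 \<le> m" "m \<le> k"
  shows "prob {\<omega> \<in> space M. window_sum m Y m \<omega> < h} ^ N
       \<le> prob {\<omega> \<in> space M. \<forall>i\<in>{k..k + N - 1}. window_sum m Y i \<omega> < h}"
proof -
  define W where "W = {k..k + N - 1}"
  define J where "J = {1..k + N}"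
  define E where "E i = {z \<in> space (PiM J (\<lambda>_. borel)). (\<Sum>j\<in>{i - m + 1..i}. z j) < h}" for i
  have J: "finite J" "J \<subseteq> {1..}" "J \<noteq> {}"
    unfolding J_def using \<open>1 \<le> m\<close> \<open>m \<le> k\<close> by auto
  have window_J: "{i - m + 1..i} \<subseteq> J" if "i \<in> W" for i
    using that \<open>1 \<le> m\<close> \<open>m \<le> k\<close> unfolding W_def J_def by auto
  have E_sets: "E i \<in> sets (PiM J (\<lambda>_. borel))" if "i \<in> W" for i
  proof -
    have "(\<lambda>z::nat \<Rightarrow> real. \<Sum>j\<in>{i - m + 1..i}. z j) \<in> borel_measurable (PiM J (\<lambda>_. borel))"
      by (rule borel_measurable_sum[where f="\<lambda>j z. z j"])
        (use window_J[OF that] in \<open>auto intro: measurable_component_singleton\<close>)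
    then show ?thesis unfolding E_def by measurable
  qed
  have E_down_closed: "x \<in> E i" if "x \<in> space (PiM J (\<lambda>_. borel))" "y \<in> E i" "x \<le> y" for i x y
  proof -
    have "(\<Sum>j\<in>{i - m + 1..i}. x j) \<le> (\<Sum>j\<in>{i - m + 1..i}. y j)"
      using \<open>x \<le> y\<close> by (intro sum_mono) (simp add: le_fun_def)
    then show ?thesis using that unfolding E_def by auto
  qed
  have in_E: "(\<lambda>j\<in>J. Y j \<omega>) \<in> E i \<longleftrightarrow> window_sum m Y i \<omega> < h" if "i \<in> W" for i \<omega>
    unfolding E_def window_sum_restrict[OF window_J[OF that]] by (simp add: space_PiM)
  have law: "distr M borel (Y j) = distr M borel (Y 1)" if "j \<in> {1..}" for j
    using that by (intro identical) simp
  have prob_E: "prob {\<omega> \<in> space M. (\<lambda>j\<in>J. Y j \<omega>) \<in> E i}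
      = prob {\<omega> \<in> space M. window_sum m Y m \<omega> < h}" if "i \<in> W" for i
  proof -
    have "i \<ge> m" using that \<open>m \<le> k\<close> unfolding W_def by simp
    then show ?thesis
      using prob_window_sum_indep_identical[OF indep identical _ \<open>1 \<le> m\<close>, of "{..<h}"]
      by (simp add: in_E[OF that])
  qed
  have "card W = N" unfolding W_def using \<open>1 \<le> m\<close> \<open>m \<le> k\<close> by auto
  then have "prob {\<omega> \<in> space M. window_sum m Y m \<omega> < h} ^ N
      = (\<Prod>i\<in>W. prob {\<omega> \<in> space M. (\<lambda>j\<in>J. Y j \<omega>) \<in> E i})"
    by (simp add: prob_E)
  also have "\<dots> \<le> prob {\<omega> \<in> space M. \<forall>i\<in>W. (\<lambda>j\<in>J. Y j \<omega>) \<in> E i}"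
  proof (rule prob_all_ge_prod_indep_identical[OF indep law J])
    show "finite W" unfolding W_def by simp
    show "E i \<in> sets (PiM J (\<lambda>_. borel))" if "i \<in> W" for i
      using that by (rule E_sets)
    show "x \<in> E i" if "i \<in> W" "x \<in> space (PiM J (\<lambda>_. borel))" "y \<in> E i" "x \<le> y" for i x y
      using that(2-4) by (rule E_down_closed)
  qed
  also have "{\<omega> \<in> space M. \<forall>i\<in>W. (\<lambda>j\<in>J. Y j \<omega>) \<in> E i}
      = {\<omega> \<in> space M. \<forall>i\<in>W. window_sum m Y i \<omega> < h}"
    by (simp add: in_E)
  finally show ?thesis unfolding W_def .
qed

lemma LLR_eq_compose: "LLR f0 f1 X j = (\<lambda>\<omega>. (\<lambda>x. ln (f1 x / f0 x)) (X j \<omega>))"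
  by (simp add: LLR_def fun_eq_iff)

lemma (in prob_space) indep_vars_LLR:
  assumes "f0 \<in> borel_measurable borel" "f1 \<in> borel_measurable borel"
    and "indep_vars (\<lambda>_. borel) X I"
  shows "indep_vars (\<lambda>_. borel) (LLR f0 f1 X) I"
  unfolding LLR_eq_compose using assms by (intro indep_vars_compose2[OF assms(3)]) measurable

lemma (in prob_space) distr_LLR_eq:
  assumes [measurable]: "f0 \<in> borel_measurable borel" "f1 \<in> borel_measurable borel"
    and X: "distributed M lborel (X i) f" "distributed M lborel (X j) f"
  shows "distr M borel (LLR f0 f1 X i) = distr M borel (LLR f0 f1 X j)"
proof -
  have [measurable]: "X i \<in> borel_measurable M" "X j \<in> borel_measurable M"
    using X[THEN distributed_measurable] by simp_all
  have "distr M borel (X l) = density lborel f" if "distributed M lborel (X l) f" for l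
    using distributed_distr_eq_density[OF that] by (simp add: distr_cong[OF refl sets_lborel])
  then have "distr M borel (X i) = distr M borel (X j)" using X by simp
  then show ?thesis unfolding LLR_eq_compose
    by (subst (1 2) distr_distr[symmetric, unfolded comp_def]) measurable
qed

theorem lemma1:
  fixes M :: "'a measure" and X :: "nat \<Rightarrow> 'a \<Rightarrow> real"
    and f0 f1 :: "real \<Rightarrow> real" and h :: real and m k N :: nat
  assumes "prob_space M"
    and "f0 \<in> borel_measurable borel" "\<And>x. f0 x \<ge> 0" "integral\<^sup>L lborel f0 = 1" "integrable lborel f0"
    and "f1 \<in> borel_measurable borel" "\<And>x. f1 x \<ge> 0" "integral\<^sup>L lborel f1 = 1" "integrable lborel f1"
    and "prob_space.indep_vars M (\<lambda>_. borel) X {1..}"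
    and "\<And>i. i \<ge> 1 \<Longrightarrow> distributed M lborel (X i) (\<lambda>x. ennreal (f0 x))"
    and "\<And>i. i \<ge> 1 \<Longrightarrow> AE \<omega> in M. f0 (X i \<omega>) > 0 \<and> f1 (X i \<omega>) > 0"
    and "m \<ge> 1" "k \<ge> m" "N > k"
  shows "measure M {\<omega> \<in> space M. \<forall>i\<in>{k..k + N - 1}. window_sum m (LLR f0 f1 X) i \<omega> < h}
           \<ge> (measure M {\<omega> \<in> space M. window_sum m (LLR f0 f1 X) m \<omega> < h}) ^ N"
proof -
  interpret prob_space M by fact
  show ?thesis
  \<comment> \<open>only the i.i.d. property of the log-likelihood ratios is used\<close>
  proof (rule prob_window_sums_less_ge_power)
    show "indep_vars (\<lambda>_. borel) (LLR f0 f1 X) {1..}"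
      using assms(2,6,10) by (rule indep_vars_LLR)
    show "distr M borel (LLR f0 f1 X j) = distr M borel (LLR f0 f1 X 1)" if "1 \<le> j" for j
      using assms(2,6) assms(11)[OF that] assms(11)[of 1] by (rule distr_LLR_eq) simp
  qed (use assms(13,14) in simp_all)
qed

end
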